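(* Let $T>0$ and let $F,G:[0,T]\to\mathbb{R}$ be continuously differentiable functions with $F(0)=0$ and $F(t)>0$ for $t\in(0,T]$. For $\varepsilon>0$ and $t\in(0,T]$ put $$N_\varepsilon(t)=\int_0^t\exp\Big\{-\frac1\varepsilon\int_s^tF(v)\,dv\Big\}G(s)\,ds.$$ Then for any $t\in(0,T]$, as $\varepsilon\to0$, $$N_\varepsilon(t)=\varepsilon\,\frac{G(t)}{F(t)}\big(1+O(\varepsilon)\big).$$ *)

theory Defs
  imports "HOL-Analysis.Analysis" "HOL-Library.Landau_Symbols"
begin

definition C1_on :: "(real \<Rightarrow> real) \<Rightarrow> real set \<Rightarrow> bool" where
  "C1_on f S \<longleftrightarrow> (\<exists>f'. (\<forall>x\<in>S. (f has_real_derivative f' x) (at x within S))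
                        \<and> continuous_on S f')"

definition N_eps :: "(real \<Rightarrow> real) \<Rightarrow> (real \<Rightarrow> real) \<Rightarrow> real \<Rightarrow> real \<Rightarrow> real" where
  "N_eps F G \<epsilon> t = integral {0..t} (\<lambda>s. exp (- (1/\<epsilon>) * integral {s..t} F) * G s)"

end

theory Submission
  imports Defs
begin

(* Laplace's method at an endpoint. The kernel is exp(-P(s)/\<epsilon>) with P(s) = \<integral>_s^t F, which
   vanishes at s = t and grows at least linearly to the left of t since F(t) > 0. Split [0,t] at
   some d < t with F \<ge> F(t)/2 on [d,t]. On [0,d] the kernel is at most exp(-c/\<epsilon>) = O(\<epsilon>^2).
   On [d,t] the kernel has derivative (F/\<epsilon>) exp(-P/\<epsilon>), so integrating G = R F with R = G/F
   by parts leaves \<epsilon> R(t), an exponentially small boundary term at d, and \<epsilon> \<integral> R' exp(-P/\<epsilon>),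
   whose integral is O(\<epsilon>) because the kernel decays like exp(-F(t)(t-s)/(2\<epsilon>)). *)

lemma exp_minus_le_two_div_square:
  fixes x :: real assumes "x > 0" shows "exp (- x) \<le> 2 / x\<^sup>2"
proof -
  have "x\<^sup>2 / 2 \<le> exp x" using exp_lower_Taylor_quadratic[of x] assms by simp
  thus ?thesis using assms by (simp add: exp_minus field_simps)
qed

lemma integral_exp_decay_le:
  fixes k d t :: real assumes "k > 0" "d \<le> t"
  shows "integral {d..t} (\<lambda>s. exp (- k * (t - s))) \<le> 1 / k"
proof -
  let ?g = "\<lambda>s. exp (- k * (t - s)) / k"
  have "((\<lambda>s. exp (- k * (t - s))) has_integral ?g t - ?g d) {d..t}"
  proof (rule fundamental_theorem_of_calculus[OF assms(2)])
    fix s assume "s \<in> {d..t}"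
    have "(?g has_real_derivative exp (- k * (t - s)) * (- k * (0 - 1)) / k) (at s within {d..t})"
      using assms by (intro derivative_eq_intros) auto
    thus "(?g has_vector_derivative exp (- k * (t - s))) (at s within {d..t})"
      using assms by (simp add: has_real_derivative_iff_has_vector_derivative[symmetric])
  qed
  thus ?thesis using assms by (simp add: integral_unique)
qed

lemma C1_on_subset: "C1_on f S \<Longrightarrow> T \<subseteq> S \<Longrightarrow> C1_on f T"
  unfolding C1_on_def by (blast intro: continuous_on_subset has_field_derivative_subset)

lemma C1_on_imp_continuous_on: "C1_on f S \<Longrightarrow> continuous_on S f"
  unfolding C1_on_def using DERIV_continuous_on by blast

lemma C1_on_divide:
  fixes f g :: "real \<Rightarrow> real"
  assumes "C1_on f S" "C1_on g S" "\<And>x. x \<in> S \<Longrightarrow> g x \<noteq> 0"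
  shows "C1_on (\<lambda>x. f x / g x) S"
proof -
  obtain f' g' where df: "\<And>x. x \<in> S \<Longrightarrow> (f has_real_derivative f' x) (at x within S)"
    and dg: "\<And>x. x \<in> S \<Longrightarrow> (g has_real_derivative g' x) (at x within S)"
    and "continuous_on S f'" "continuous_on S g'"
    using assms(1,2) unfolding C1_on_def by blast
  moreover have "continuous_on S f" "continuous_on S g"
    using assms(1,2) by (simp_all add: C1_on_imp_continuous_on)
  ultimately show ?thesis
    unfolding C1_on_def using assms(3)
    by (intro exI[of _ "\<lambda>x. (f' x * g x - f x * g' x) / (g x * g x)"] conjI ballI DERIV_divide
          continuous_intros) auto
qed

lemma continuous_on_ge_half_near_right_endpoint:
  fixes F :: "real \<Rightarrow> real"
  assumes "continuous_on {a..t} F" "a < t" "F t > 0"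
  obtains d where "a \<le> d" "d < t" "\<And>s. s \<in> {d..t} \<Longrightarrow> F t / 2 \<le> F s"
proof -
  have "t \<in> {a..t}" "F t / 2 > 0" using assms(2,3) by auto
  then obtain \<delta> where "\<delta> > 0"
    and \<delta>: "\<And>s. s \<in> {a..t} \<Longrightarrow> dist s t < \<delta> \<Longrightarrow> dist (F s) (F t) < F t / 2"
    using assms(1) unfolding continuous_on_iff by metis
  show ?thesis
  proof
    show "a \<le> max a (t - \<delta> / 2)" "max a (t - \<delta> / 2) < t" using \<open>\<delta> > 0\<close> assms(2) by auto
    fix s assume "s \<in> {max a (t - \<delta> / 2)..t}"
    with \<delta>[of s] \<open>\<delta> > 0\<close> have "\<bar>F s - F t\<bar> < F t / 2" by (auto simp: dist_real_def)
    thus "F t / 2 \<le> F s" by arith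
  qed
qed

lemma integral_tail_ge:
  fixes F :: "real \<Rightarrow> real"
  assumes "continuous_on {a..t} F" "\<And>s. s \<in> {a..t} \<Longrightarrow> 0 \<le> F s"
    and "\<And>s. s \<in> {d..t} \<Longrightarrow> m \<le> F s" "a \<le> d" "d \<le> t" "s \<in> {a..t}"
  shows "m * (t - max s d) \<le> integral {s..t} F"
proof -
  have int: "F integrable_on {u..v}" if "a \<le> u" "v \<le> t" for u v
    using that by (intro integrable_continuous_interval continuous_on_subset[OF assms(1)]) auto
  have "m * (t - max s d) = integral {max s d..t} (\<lambda>_. m)"
    using assms by (simp add: content_real)
  also have "\<dots> \<le> integral {max s d..t} F"
    using assms by (intro integral_le int) auto
  also have "\<dots> \<le> integral {s..t} F"
  proof (cases "s \<le> d")
    case True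
    have "integral {s..d} F + integral {d..t} F = integral {s..t} F"
      using True assms by (intro Henstock_Kurzweil_Integration.integral_combine int) auto
    moreover have "0 \<le> integral {s..d} F" using True assms by (intro integral_nonneg int) auto
    ultimately show ?thesis using True by simp
  qed simp
  finally show ?thesis .
qed

lemma integral_exp_phase_by_parts:
  fixes P F R R' :: "real \<Rightarrow> real" and e d t :: real
  assumes "e > 0" "d \<le> t"
    and dP: "\<And>s. s \<in> {d..t} \<Longrightarrow> (P has_real_derivative - F s) (at s within {d..t})"
    and dR: "\<And>s. s \<in> {d..t} \<Longrightarrow> (R has_real_derivative R' s) (at s within {d..t})"
    and cR': "continuous_on {d..t} R'"
  defines "E \<equiv> \<lambda>s. exp (- (1/e) * P s)"
  shows "integral {d..t} (\<lambda>s. E s * (R s * F s))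
           = e * (R t * E t - R d * E d) - e * integral {d..t} (\<lambda>s. R' s * E s)"
proof -
  have dE: "(E has_real_derivative E s * (F s / e)) (at s within {d..t})" if "s \<in> {d..t}" for s
    unfolding E_def by (rule derivative_eq_intros dP[OF that] refl | simp)+
  have FTC: "((\<lambda>s. e * (R' s * E s) + E s * (R s * F s)) has_integral
               e * (R t * E t) - e * (R d * E d)) {d..t}"
  proof (rule fundamental_theorem_of_calculus[OF \<open>d \<le> t\<close>])
    fix s assume s: "s \<in> {d..t}"
    have "((\<lambda>s. e * (R s * E s)) has_real_derivative e * (R' s * E s + E s * (F s / e) * R s))
            (at s within {d..t})"
      by (intro DERIV_cmult DERIV_mult dR dE s)
    moreover have "e * (R' s * E s + E s * (F s / e) * R s) = e * (R' s * E s) + E s * (R s * F s)"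
      using \<open>e > 0\<close> by (simp add: field_simps)
    ultimately show "((\<lambda>s. e * (R s * E s)) has_vector_derivative
                        e * (R' s * E s) + E s * (R s * F s)) (at s within {d..t})"
      by (simp add: has_real_derivative_iff_has_vector_derivative[symmetric])
  qed
  have "(\<lambda>s. R' s * E s) integrable_on {d..t}"
    using DERIV_continuous_on[OF dE] by (intro integrable_continuous_interval continuous_intros cR')
  from has_integral_diff[OF FTC has_integral_mult_right[OF integrable_integral[OF this], of e]]
  show ?thesis by (simp add: integral_unique algebra_simps)
qed

lemma laplace_endpoint_estimate:
  fixes P F R R' :: "real \<Rightarrow> real" and e m B d t :: real
  assumes "e > 0" "m > 0" "d \<le> t"
    and dP: "\<And>s. s \<in> {d..t} \<Longrightarrow> (P has_real_derivative - F s) (at s within {d..t})"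
    and dR: "\<And>s. s \<in> {d..t} \<Longrightarrow> (R has_real_derivative R' s) (at s within {d..t})"
    and cR': "continuous_on {d..t} R'"
    and "P t = 0" and P_ge: "\<And>s. s \<in> {d..t} \<Longrightarrow> m * (t - s) \<le> P s"
    and R'_le: "\<And>s. s \<in> {d..t} \<Longrightarrow> \<bar>R' s\<bar> \<le> B"
  shows "\<bar>integral {d..t} (\<lambda>s. exp (- (1/e) * P s) * (R s * F s)) - e * R t\<bar>
           \<le> e * \<bar>R d\<bar> * exp (- (1/e) * P d) + e\<^sup>2 * B / m"
proof -
  define E where "E s = exp (- (1/e) * P s)" for s
  have E_le: "E s \<le> exp (- (m/e) * (t - s))" if "s \<in> {d..t}" for s
    using P_ge[OF that] \<open>e > 0\<close> by (simp add: E_def divide_right_mono)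
  have "norm (integral {d..t} (\<lambda>s. R' s * E s)) \<le> integral {d..t} (\<lambda>s. B * exp (- (m/e) * (t - s)))"
  proof (rule integral_norm_bound_integral)
    show "(\<lambda>s. R' s * E s) integrable_on {d..t}"
      using DERIV_continuous_on[OF dP] unfolding E_def
      by (intro integrable_continuous_interval continuous_intros cR')
    show "(\<lambda>s. B * exp (- (m/e) * (t - s))) integrable_on {d..t}"
      by (intro integrable_continuous_interval continuous_intros)
    fix s assume s: "s \<in> {d..t}"
    have "\<bar>R' s\<bar> * E s \<le> B * exp (- (m/e) * (t - s))"
      using R'_le[OF s] E_le[OF s] by (intro mult_mono) (auto simp: E_def)
    then show "norm (R' s * E s) \<le> B * exp (- (m/e) * (t - s))"
      by (simp add: abs_mult E_def)
  qed
  also have "\<dots> = B * integral {d..t} (\<lambda>s. exp (- (m/e) * (t - s)))"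
    by (rule integral_mult_right)
  also have "\<dots> \<le> B * (e / m)"
    using R'_le[of d] integral_exp_decay_le[of "m/e" d t] \<open>d \<le> t\<close> \<open>e > 0\<close> \<open>m > 0\<close>
    by (intro mult_left_mono) auto
  finally have "e * \<bar>integral {d..t} (\<lambda>s. R' s * E s)\<bar> \<le> e * (B * (e / m))"
    using \<open>e > 0\<close> by (intro mult_left_mono) auto
  then have I_le: "e * \<bar>integral {d..t} (\<lambda>s. R' s * E s)\<bar> \<le> e\<^sup>2 * B / m"
    by (simp add: power2_eq_square mult_ac)
  have "integral {d..t} (\<lambda>s. E s * (R s * F s)) - e * R t
          = - (e * R d * E d + e * integral {d..t} (\<lambda>s. R' s * E s))"
    using integral_exp_phase_by_parts[OF \<open>e > 0\<close> \<open>d \<le> t\<close> dP dR cR'] \<open>P t = 0\<close>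
    by (simp add: E_def algebra_simps)
  also have "\<bar>\<dots>\<bar> \<le> e * \<bar>R d\<bar> * E d + e * \<bar>integral {d..t} (\<lambda>s. R' s * E s)\<bar>"
    using abs_triangle_ineq[of "e * R d * E d" "e * integral {d..t} (\<lambda>s. R' s * E s)"] \<open>e > 0\<close>
    by (simp add: abs_mult E_def)
  finally show ?thesis using I_le by (simp add: E_def)
qed

lemma laplace_interior_estimate:
  fixes P G :: "real \<Rightarrow> real" and e c M a d :: real
  assumes "e > 0" "a \<le> d" "continuous_on {a..d} P" "continuous_on {a..d} G"
    and P_ge: "\<And>s. s \<in> {a..d} \<Longrightarrow> c \<le> P s" and G_le: "\<And>s. s \<in> {a..d} \<Longrightarrow> \<bar>G s\<bar> \<le> M"
  shows "\<bar>integral {a..d} (\<lambda>s. exp (- (1/e) * P s) * G s)\<bar> \<le> M * (d - a) * exp (- (c/e))"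
proof -
  have "norm (integral {a..d} (\<lambda>s. exp (- (1/e) * P s) * G s)) \<le> M * exp (- (c/e)) * (d - a)"
  proof (rule integral_bound[OF \<open>a \<le> d\<close>])
    show "continuous_on {a..d} (\<lambda>s. exp (- (1/e) * P s) * G s)"
      using assms by (intro continuous_intros)
    fix s assume s: "s \<in> {a..d}"
    have "exp (- (1/e) * P s) \<le> exp (- (c/e))"
      using P_ge[OF s] \<open>e > 0\<close> by (simp add: divide_right_mono)
    then show "norm (exp (- (1/e) * P s) * G s) \<le> M * exp (- (c/e))"
      using G_le[OF s] by (simp add: abs_mult mult.commute mult_mono)
  qed
  then show ?thesis by (simp add: mult_ac)
qed

lemma laplace_integral_estimate:
  fixes P F G R R' :: "real \<Rightarrow> real" and e m d t MG B :: real
  assumes "0 < e" "e \<le> 1" "m > 0" "0 \<le> d" "d < t"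
    and dP: "\<And>s. s \<in> {0..t} \<Longrightarrow> (P has_real_derivative - F s) (at s within {0..t})"
    and "P t = 0" and P_ge: "\<And>s. s \<in> {0..t} \<Longrightarrow> m * (t - max s d) \<le> P s"
    and cG: "continuous_on {0..t} G" and G_le: "\<And>s. s \<in> {0..t} \<Longrightarrow> \<bar>G s\<bar> \<le> MG"
    and G_eq: "\<And>s. s \<in> {d..t} \<Longrightarrow> G s = R s * F s"
    and dR: "\<And>s. s \<in> {d..t} \<Longrightarrow> (R has_real_derivative R' s) (at s within {d..t})"
    and cR': "continuous_on {d..t} R'" and R'_le: "\<And>s. s \<in> {d..t} \<Longrightarrow> \<bar>R' s\<bar> \<le> B"
  defines "c \<equiv> m * (t - d)"
  shows "\<bar>integral {0..t} (\<lambda>s. exp (- (1/e) * P s) * G s) - e * R t\<bar>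
           \<le> (2 * MG * d / c\<^sup>2 + 2 * \<bar>R d\<bar> / c\<^sup>2 + B / m) * e\<^sup>2"
proof -
  let ?E = "\<lambda>s. exp (- (1/e) * P s)"
  have "c > 0" using \<open>m > 0\<close> \<open>d < t\<close> by (simp add: c_def)
  have cP: "continuous_on {0..t} P" using DERIV_continuous_on[OF dP] .
  have "integral {0..t} (\<lambda>s. ?E s * G s)
          = integral {0..d} (\<lambda>s. ?E s * G s) + integral {d..t} (\<lambda>s. ?E s * G s)"
    using assms cP cG
    by (intro Henstock_Kurzweil_Integration.integral_combine[symmetric]
          integrable_continuous_interval continuous_intros) auto
  also have "integral {d..t} (\<lambda>s. ?E s * G s) = integral {d..t} (\<lambda>s. ?E s * (R s * F s))"
    using G_eq by (intro integral_cong) auto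
  finally have split: "integral {0..t} (\<lambda>s. ?E s * G s)
                         = integral {0..d} (\<lambda>s. ?E s * G s) + integral {d..t} (\<lambda>s. ?E s * (R s * F s))" .
  have far: "\<bar>integral {0..d} (\<lambda>s. ?E s * G s)\<bar> \<le> MG * d * exp (- (c/e))"
    using laplace_interior_estimate[OF \<open>0 < e\<close> \<open>0 \<le> d\<close>, of P G c MG] assms cP cG P_ge G_le
    by (fastforce simp: c_def intro: continuous_on_subset)
  have near: "\<bar>integral {d..t} (\<lambda>s. ?E s * (R s * F s)) - e * R t\<bar> \<le> e * \<bar>R d\<bar> * ?E d + e\<^sup>2 * B / m"
  proof (rule laplace_endpoint_estimate[where P = P and F = F and R = R, OF \<open>0 < e\<close> \<open>m > 0\<close> _ _ dR cR' \<open>P t = 0\<close> _ R'_le])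
    show "(P has_real_derivative - F s) (at s within {d..t})" if "s \<in> {d..t}" for s
      using that \<open>0 \<le> d\<close> by (intro has_field_derivative_subset[OF dP]) auto
    show "m * (t - s) \<le> P s" if "s \<in> {d..t}" for s
      using that \<open>0 \<le> d\<close> P_ge[of s] by auto
  qed (use \<open>d < t\<close> in auto)
  have "e * \<bar>R d\<bar> * ?E d \<le> 1 * \<bar>R d\<bar> * exp (- (c/e))"
    using assms P_ge[of d] by (intro mult_mono) (auto simp: c_def divide_right_mono)
  moreover have exp_le: "exp (- (c/e)) \<le> 2 * e\<^sup>2 / c\<^sup>2"
    using exp_minus_le_two_div_square[of "c/e"] \<open>c > 0\<close> \<open>0 < e\<close> by (simp add: power_divide)
  ultimately have "\<bar>integral {0..t} (\<lambda>s. ?E s * G s) - e * R t\<bar>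
                     \<le> MG * d * exp (- (c/e)) + \<bar>R d\<bar> * exp (- (c/e)) + e\<^sup>2 * B / m"
    using split far near unfolding abs_le_iff by simp
  also have "\<dots> \<le> MG * d * (2 * e\<^sup>2 / c\<^sup>2) + \<bar>R d\<bar> * (2 * e\<^sup>2 / c\<^sup>2) + e\<^sup>2 * B / m"
    using exp_le G_le[of 0] \<open>0 \<le> d\<close> \<open>d < t\<close> by (intro add_mono mult_left_mono) auto
  also have "\<dots> = (2 * MG * d / c\<^sup>2 + 2 * \<bar>R d\<bar> / c\<^sup>2 + B / m) * e\<^sup>2"
    by (simp add: field_simps)
  finally show ?thesis .
qed

lemma N_eps_expansion:
  fixes F G :: "real \<Rightarrow> real" and t :: real
  assumes "t > 0" and F: "C1_on F {0..t}" and G: "C1_on G {0..t}"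
    and F_nonneg: "\<And>s. s \<in> {0..t} \<Longrightarrow> 0 \<le> F s" and "F t > 0"
  shows "(\<lambda>\<epsilon>. N_eps F G \<epsilon> t - \<epsilon> * G t / F t) \<in> O[at_right 0](\<lambda>\<epsilon>. \<epsilon> ^ 2)"
proof -
  have cF: "continuous_on {0..t} F" and cG: "continuous_on {0..t} G"
    using F G by (simp_all add: C1_on_imp_continuous_on)
  define m where "m = F t / 2"
  obtain d where d: "0 \<le> d" "d < t" and F_ge: "\<And>s. s \<in> {d..t} \<Longrightarrow> m \<le> F s"
    using continuous_on_ge_half_near_right_endpoint[OF cF \<open>t > 0\<close> \<open>F t > 0\<close>] m_def by blast
  define P where "P s = integral {s..t} F" for s
  have P_ge: "m * (t - max s d) \<le> P s" if "s \<in> {0..t}" for s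
    unfolding P_def using integral_tail_ge[OF cF F_nonneg F_ge d(1)] d that by simp
  have dP: "(P has_real_derivative - F s) (at s within {0..t})" if "s \<in> {0..t}" for s
    unfolding P_def by (rule integral_has_real_derivative'[OF cF that])
  have "C1_on (\<lambda>s. G s / F s) {d..t}"
    using F_ge \<open>F t > 0\<close> d m_def
    by (intro C1_on_divide C1_on_subset[OF F] C1_on_subset[OF G]) fastforce+
  then obtain R' where dR: "\<And>s. s \<in> {d..t} \<Longrightarrow> ((\<lambda>s. G s / F s) has_real_derivative R' s) (at s within {d..t})"
    and cR': "continuous_on {d..t} R'" unfolding C1_on_def by blast
  obtain MG where MG: "\<And>s. s \<in> {0..t} \<Longrightarrow> \<bar>G s\<bar> \<le> MG"
    using continuous_on_compact_bound[OF compact_Icc cG] by auto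
  obtain B where B: "\<And>s. s \<in> {d..t} \<Longrightarrow> \<bar>R' s\<bar> \<le> B"
    using continuous_on_compact_bound[OF compact_Icc cR'] by auto
  define K where "K = 2 * MG * d / (m * (t - d))\<^sup>2 + 2 * \<bar>G d / F d\<bar> / (m * (t - d))\<^sup>2 + B / m"
  have "\<bar>N_eps F G e t - e * G t / F t\<bar> \<le> K * e\<^sup>2" if "0 < e" "e \<le> 1" for e
    using laplace_integral_estimate[OF that _ d dP _ P_ge cG MG _ dR cR' B] F_ge \<open>F t > 0\<close>
    by (fastforce simp: K_def N_eps_def P_def m_def)
  moreover have "eventually (\<lambda>e. 0 < e \<and> e \<le> (1::real)) (at_right 0)"
    unfolding eventually_at_right_field by (intro exI[of _ 1]) auto
  ultimately show ?thesis
    by (intro bigoI[of _ K]) (auto elim: eventually_mono)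
qed

theorem lemma2:
  fixes F G :: "real \<Rightarrow> real" and T t :: real
  assumes "T > 0"
    and "C1_on F {0..T}" and "C1_on G {0..T}"
    and "F 0 = 0" and "\<And>s. s \<in> {0<..T} \<Longrightarrow> F s > 0"
    and "t \<in> {0<..T}"
  shows "(\<lambda>\<epsilon>. N_eps F G \<epsilon> t - \<epsilon> * G t / F t) \<in> O[at_right 0](\<lambda>\<epsilon>. \<epsilon> ^ 2)"
proof (rule N_eps_expansion)
  have sub: "{0..t} \<subseteq> {0..T}" using assms(6) by auto
  show "C1_on F {0..t}" "C1_on G {0..t}" using assms(2,3) sub by (auto intro: C1_on_subset)
  show "0 \<le> F s" if "s \<in> {0..t}" for s
    using that sub assms(4) assms(5)[of s] by (cases "s = 0") auto
  show "t > 0" "F t > 0" using assms(5,6) by auto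
qed

end
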